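(* For integers $n\ge1$, $\alpha\ge0$ and $a\ne b$, define $$T_n(a,b,\alpha)=\int_{[0,\infty)^n}\prod_{i=1}^n(a-y_i)(b-y_i)^{\alpha}e^{-y_i}y_i^2\,\Delta_n^2(\mathbf{y})\,dy_1\cdots dy_n.$$ Then $$T_n(a,b,\alpha)=\frac{(-1)^{n+\alpha(n+\alpha)}\widetilde{\mathcal{K}}_{n,\alpha}}{(b-a)^{\alpha}}\det\Big[L^{(2)}_{n+i-1}(a)\;\;\;L^{(j)}_{n+i+1-j}(b)\Big]_{\substack{i=1,\dots,\alpha+1\\ j=2,\dots,\alpha+1}},\qquad \widetilde{\mathcal{K}}_{n,\alpha}=\frac{\prod_{j=1}^{\alpha+1}(n+j-1)!\,\prod_{j=0}^{n-1}(j+1)!\,(j+2)!}{\prod_{j=0}^{\alpha-1}j!}.$$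
   Context: $\Delta_n(\mathbf{y})=\prod_{1\le i<k\le n}(y_k-y_i)$. $L^{(\rho)}_M(z)=\frac{(\rho+1)_M}{M!}\sum_{j=0}^M\frac{(-M)_j}{(\rho+1)_j}\frac{z^j}{j!}$ is the generalized Laguerre polynomial. Empty products equal $1$. $\det[A_i\;\;B_{i,j}]_{i=1,\dots,\alpha+1;\,j=2,\dots,\alpha+1}$ denotes the determinant of the $(\alpha+1)\times(\alpha+1)$ matrix with first column $(A_i)$ and $j$-th column $(B_{i,j})$ for $j=2,\dots,\alpha+1$. *)

theory Defs
  imports "HOL-Analysis.Analysis"
begin

text \<open>Generalized Laguerre polynomial L^{(rho)}_M(z), with integer degree M;
  by the standard convention L_M = 0 for M < 0.\<close>
definition laguerre :: "real \<Rightarrow> int \<Rightarrow> real \<Rightarrow> real" where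
  "laguerre \<rho> M z = (if M < 0 then 0 else
     pochhammer (\<rho> + 1) (nat M) / fact (nat M) *
     (\<Sum>j = 0..nat M. pochhammer (- real (nat M)) j / pochhammer (\<rho> + 1) j * z ^ j / fact j))"

definition vandermonde :: "nat \<Rightarrow> (nat \<Rightarrow> real) \<Rightarrow> real" where
  "vandermonde n y = (\<Prod>i<n. \<Prod>k\<in>{i<..<n}. (y k - y i))"

definition det_fun :: "nat \<Rightarrow> (nat \<Rightarrow> nat \<Rightarrow> real) \<Rightarrow> real" where
  "det_fun m A = (\<Sum>p | p permutes {..<m}. of_int (sign p) * (\<Prod>i<m. A i (p i)))"

definition T_int :: "nat \<Rightarrow> real \<Rightarrow> real \<Rightarrow> nat \<Rightarrow> real" where
  "T_int n a b \<alpha> = set_lebesgue_integral (Pi\<^sub>M {..<n} (\<lambda>_. lborel)) (Pi\<^sub>E {..<n} (\<lambda>_. {0..}))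
     (\<lambda>y. (\<Prod>i<n. (a - y i) * (b - y i) ^ \<alpha> * exp (- y i) * (y i)\<^sup>2) * (vandermonde n y)\<^sup>2)"

definition K_tilde :: "nat \<Rightarrow> nat \<Rightarrow> real" where
  "K_tilde n \<alpha> = (\<Prod>j = 1..\<alpha>+1. fact (n + j - 1)) * (\<Prod>j<n. fact (j + 1) * fact (j + 2))
     / (\<Prod>j<\<alpha>. fact j)"

end

theory Submission
  imports Defs "HOL-Probability.Distributions" "Jordan_Normal_Form.Determinant"
begin

text \<open>
  Let \<open>p\<^sub>k\<close> be the monic Laguerre polynomials, orthogonal for the weight \<open>t\<^sup>2 e\<^sup>-\<^sup>t\<close> on
  \<open>[0,\<infinity>)\<close> with squared norms \<open>h\<^sub>k = k! (k+2)!\<close>. Since \<open>\<Delta>\<^sub>n(y) = det [p\<^sub>j(y\<^sub>i)]\<close>, the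
  Heine--Andr\'eief identity turns \<open>T\<^sub>n\<close> into \<open>n! det [\<langle>q p\<^sub>i p\<^sub>j\<rangle>]\<^sub>i\<^sub>,\<^sub>j\<^sub><\<^sub>n\<close> with
  \<open>q(x) = (a - x)(b - x)\<^sup>\<alpha>\<close>, i.e. \<open>n! h\<^sub>0\<cdots>h\<^sub>n\<^sub>-\<^sub>1 det C\<close> where \<open>q p\<^sub>i = \<Sum>\<^sub>k C\<^sub>i\<^sub>k p\<^sub>k\<close>.
  The matrix \<open>C\<close> is banded: \<open>C\<^sub>i\<^sub>k = 0\<close> for \<open>k > i + \<alpha> + 1\<close> and \<open>C\<^sub>i\<^sub>,\<^sub>i\<^sub>+\<^sub>\<alpha>\<^sub>+\<^sub>1 = \<plusminus>1\<close>.
  The \<open>\<alpha> + 1\<close> functionals \<open>\<phi>\<^sub>0 P = P(a)\<close>, \<open>\<phi>\<^sub>m P = P\<^sup>(\<^sup>m\<^sup>-\<^sup>1\<^sup>)(b)\<close> all vanish on multiples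
  of \<open>q\<close>, so completing the first \<open>n\<close> rows of \<open>C\<close> to a square matrix of determinant \<open>1\<close> and
  multiplying it with \<open>[\<phi>\<^sub>m(p\<^sub>k)]\<close> yields a block triangular matrix, whence
  \<open>det C \<cdot> det [\<phi>\<^sub>m(p\<^sub>k)]\<^sub>k\<^sub>\<le>\<^sub>\<alpha> = det [\<phi>\<^sub>m(p\<^sub>n\<^sub>+\<^sub>k)]\<^sub>k\<^sub>\<le>\<^sub>\<alpha>\<close> (Christoffel's argument).
  The left factor is a confluent Vandermonde determinant \<open>\<Prod>\<^sub>r\<^sub><\<^sub>\<alpha> r! \<cdot> (b - a)\<^sup>\<alpha>\<close>; the right
  one consists of Laguerre values, because derivatives of Laguerre polynomials are again
  Laguerre polynomials.
\<close>

(* Otherwise HOL-Algebra's module.smult, imported via Jordan_Normal_Form, captures smult. *)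
hide_const (open) module.smult

section \<open>Laguerre polynomials\<close>

definition laguerre_coeff :: "nat \<Rightarrow> nat \<Rightarrow> nat \<Rightarrow> real" where
  "laguerre_coeff \<rho> k j =
     (if j \<le> k then (-1)^j * fact (k + \<rho>) / (fact (k - j) * fact (\<rho> + j) * fact j) else 0)"

definition laguerre_poly :: "nat \<Rightarrow> nat \<Rightarrow> real poly" where
  "laguerre_poly \<rho> k = (\<Sum>j\<le>k. monom (laguerre_coeff \<rho> k j) j)"

lemma coeff_laguerre_poly: "coeff (laguerre_poly \<rho> k) i = laguerre_coeff \<rho> k i"
  unfolding laguerre_poly_def coeff_sum by (auto simp: coeff_monom laguerre_coeff_def)

lemma pochhammer_of_nat_plus_one: "pochhammer (real r + 1) m = fact (r + m) / fact r"
proof -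
  have "fact (r + m) = (fact r :: real) * pochhammer (real r + 1) m"
    using pochhammer_product'[of "1::real" r m] by (simp add: pochhammer_fact add.commute)
  then show ?thesis by simp
qed

lemma pochhammer_minus_of_nat:
  assumes "j \<le> M"
  shows "pochhammer (- real M) j = (-1)^j * fact M / fact (M - j)"
proof -
  have "pochhammer (- real M) j = (-1)^j * pochhammer (real (M - j) + 1) j"
    using assms by (simp add: pochhammer_minus of_nat_diff)
  then show ?thesis
    using pochhammer_of_nat_plus_one[of "M - j" j] assms by simp
qed

lemma poly_laguerre_poly: "poly (laguerre_poly \<rho> k) z = laguerre (real \<rho>) (int k) z"
proof -
  have "laguerre (real \<rho>) (int k) z = pochhammer (real \<rho> + 1) k / fact k *
     (\<Sum>j = 0..k. pochhammer (- real k) j / pochhammer (real \<rho> + 1) j * z ^ j / fact j)"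
    by (simp add: laguerre_def)
  also have "\<dots> = (\<Sum>j = 0..k. laguerre_coeff \<rho> k j * z ^ j)"
    unfolding sum_distrib_left
  proof (rule sum.cong)
    fix j assume "j \<in> {0..k}"
    then have j: "j \<le> k" by simp
    have "fact (\<rho> + k) \<noteq> (0::real)" "fact k \<noteq> (0::real)" "fact \<rho> \<noteq> (0::real)"
      "fact (\<rho> + j) \<noteq> (0::real)" "fact (k - j) \<noteq> (0::real)" "fact j \<noteq> (0::real)" by auto
    then show "pochhammer (real \<rho> + 1) k / fact k *
        (pochhammer (- real k) j / pochhammer (real \<rho> + 1) j * z ^ j / fact j) =
        laguerre_coeff \<rho> k j * z ^ j"
      unfolding pochhammer_of_nat_plus_one pochhammer_minus_of_nat[OF j] laguerre_coeff_def
      using j by (simp add: field_simps add.commute)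
  qed simp
  also have "\<dots> = poly (laguerre_poly \<rho> k) z"
    unfolding laguerre_poly_def poly_sum by (simp add: poly_monom atMost_atLeast0)
  finally show ?thesis by simp
qed

lemma pderiv_laguerre_poly_Suc:
  "pderiv (laguerre_poly \<rho> (Suc k)) = - laguerre_poly (Suc \<rho>) k"
proof (rule poly_eqI)
  fix i
  show "coeff (pderiv (laguerre_poly \<rho> (Suc k))) i = coeff (- laguerre_poly (Suc \<rho>) k) i"
  proof (cases "i \<le> k")
    case True
    have "fact (Suc k - Suc i) = (fact (k - i) :: real)" "fact (\<rho> + Suc i) = (fact (Suc \<rho> + i) :: real)"
      "fact (Suc i) = real (Suc i) * (fact i :: real)" "fact (Suc k + \<rho>) = (fact (k + Suc \<rho>) :: real)"
      by simp_all
    moreover have "x * ((-1)^(Suc i) * A / (B * C * (x * D))) = - ((-1)^i * A / (B * C * D))"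
      if "x \<noteq> 0" for x A B C D :: real
      using that by (simp add: field_simps)
    ultimately show ?thesis
      using True unfolding coeff_pderiv coeff_minus coeff_laguerre_poly laguerre_coeff_def
      by (simp del: of_nat_Suc)
  next
    case False
    then show ?thesis
      unfolding coeff_pderiv coeff_minus coeff_laguerre_poly laguerre_coeff_def by simp
  qed
qed

lemma higher_pderiv_laguerre_poly:
  "(pderiv ^^ r) (laguerre_poly \<rho> k) =
     (if r \<le> k then smult ((-1)^r) (laguerre_poly (\<rho> + r) (k - r)) else 0)"
proof (induction r arbitrary: \<rho> k)
  case 0
  then show ?case by simp
next
  case (Suc r)
  show ?case
  proof (cases k)
    case 0
    then show ?thesis
      by (simp del: funpow.simps add: funpow_Suc_right laguerre_poly_def pderiv_monom)
  next
    case (Suc k')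
    have "(pderiv ^^ Suc r) (laguerre_poly \<rho> k) = (pderiv ^^ r) (- laguerre_poly (Suc \<rho>) k')"
      by (simp del: funpow.simps add: funpow_Suc_right Suc pderiv_laguerre_poly_Suc)
    also have "\<dots> = smult (-1) ((pderiv ^^ r) (laguerre_poly (Suc \<rho>) k'))"
      by (metis higher_pderiv_smult smult_1_left smult_minus_left)
    finally show ?thesis using Suc by (simp add: Suc.IH)
  qed
qed

section \<open>Orthogonality of the monic Laguerre polynomials\<close>

definition monic_laguerre :: "nat \<Rightarrow> nat \<Rightarrow> real poly" where
  "monic_laguerre \<rho> k = smult ((-1)^k * fact k) (laguerre_poly \<rho> k)"

definition laguerre_norm :: "nat \<Rightarrow> nat \<Rightarrow> real" where
  "laguerre_norm \<rho> k = fact k * fact (k + \<rho>)"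

definition laguerre_moment :: "nat \<Rightarrow> real poly \<Rightarrow> real" where
  "laguerre_moment \<rho> P = (\<Sum>i\<le>degree P. coeff P i * fact (i + \<rho>))"

lemma has_bochner_integral_power_exp:
  "has_bochner_integral lborel (\<lambda>t::real. indicator {0..} t * (t ^ k * exp (- t))) (fact k)"
proof (rule has_bochner_integral_nn_integral)
  show "AE t in lborel. 0 \<le> indicator {0..} t * ((t::real) ^ k * exp (- t))"
    by (intro AE_I2) (auto simp: indicator_def)
  have "(\<integral>\<^sup>+t. ennreal (indicator {0..} t * (t ^ k * exp (- t))) \<partial>lborel) =
        (\<integral>\<^sup>+t. ennreal (t ^ k * exp (- t)) * indicator {0..} t \<partial>lborel)"
    by (rule nn_integral_cong) (auto simp: indicator_def)
  also have "\<dots> = ennreal (fact k)"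
    using nn_intergal_power_times_exp_Ici[of k] by simp
  finally show "(\<integral>\<^sup>+t. ennreal (indicator {0..} t * (t ^ k * exp (- t))) \<partial>lborel) = ennreal (fact k)" .
qed simp_all

lemma has_bochner_integral_laguerre_moment:
  "has_bochner_integral lborel (\<lambda>t::real. indicator {0..} t * (poly P t * t ^ \<rho> * exp (- t)))
     (laguerre_moment \<rho> P)"
proof -
  have "(\<lambda>t::real. indicator {0..} t * (poly P t * t ^ \<rho> * exp (- t))) =
     (\<lambda>t. \<Sum>i\<le>degree P. coeff P i * (indicator {0..} t * (t ^ (i + \<rho>) * exp (- t))))"
    unfolding poly_altdef sum_distrib_left sum_distrib_right
    by (intro ext sum.cong) (auto simp: power_add algebra_simps)
  then show ?thesis
    unfolding laguerre_moment_def
    by (simp add: has_bochner_integral_sum has_bochner_integral_mult_right has_bochner_integral_power_exp)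
qed

lemma coeff_monic_laguerre:
  "coeff (monic_laguerre \<rho> k) j = (if j \<le> k then
     (-1)^k * fact k * ((-1)^j * fact (k + \<rho>) / (fact (k - j) * fact (\<rho> + j) * fact j)) else 0)"
  by (simp add: monic_laguerre_def coeff_laguerre_poly laguerre_coeff_def)

lemma lead_coeff_monic_laguerre: "coeff (monic_laguerre \<rho> k) k = 1"
  unfolding coeff_monic_laguerre by (simp add: add.commute flip: power_add)

lemma degree_monic_laguerre: "degree (monic_laguerre \<rho> k) = k"
proof (rule antisym)
  show "degree (monic_laguerre \<rho> k) \<le> k"
    by (rule degree_le) (simp add: coeff_monic_laguerre)
  show "k \<le> degree (monic_laguerre \<rho> k)"
    by (rule le_degree) (simp add: lead_coeff_monic_laguerre)
qed

lemma monic_laguerre_nonzero: "monic_laguerre \<rho> k \<noteq> 0"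
  using lead_coeff_monic_laguerre[of \<rho> k] by auto

lemma laguerre_norm_pos: "laguerre_norm \<rho> k > 0"
  by (simp add: laguerre_norm_def)

lemma laguerre_moment_degree_le:
  assumes "degree P \<le> K"
  shows "laguerre_moment \<rho> P = (\<Sum>i\<le>K. coeff P i * fact (i + \<rho>))"
  unfolding laguerre_moment_def
  by (rule sum.mono_neutral_left) (use assms in \<open>auto simp: coeff_eq_0\<close>)

lemma laguerre_moment_add: "laguerre_moment \<rho> (P + Q) = laguerre_moment \<rho> P + laguerre_moment \<rho> Q"
proof -
  have "degree (P + Q) \<le> max (degree P) (degree Q)"
    by (rule degree_add_le) auto
  then show ?thesis
    by (simp add: laguerre_moment_degree_le[of _ "max (degree P) (degree Q)"] sum.distrib algebra_simps)
qed

lemma laguerre_moment_smult: "laguerre_moment \<rho> (smult c P) = c * laguerre_moment \<rho> P"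
  by (simp add: laguerre_moment_degree_le[of "smult c P" "degree P"] laguerre_moment_def
      sum_distrib_left mult.assoc)

lemma laguerre_moment_sum: "laguerre_moment \<rho> (\<Sum>k\<in>A. f k) = (\<Sum>k\<in>A. laguerre_moment \<rho> (f k))"
  by (induction A rule: infinite_finite_induct)
    (simp_all add: laguerre_moment_add laguerre_moment_def[of _ 0])

lemma laguerre_moment_monom: "laguerre_moment \<rho> (monom c i) = c * fact (i + \<rho>)"
proof -
  have "laguerre_moment \<rho> (monom c i) = (\<Sum>j\<le>i. if j = i then c * fact (j + \<rho>) else 0)"
    unfolding laguerre_moment_degree_le[OF degree_monom_le] by (rule sum.cong) (auto simp: coeff_monom)
  then show ?thesis by simp
qed

lemma laguerre_moment_monom_mult:
  "laguerre_moment \<rho> (monom 1 m * P) = (\<Sum>j\<le>degree P. coeff P j * fact (j + m + \<rho>))"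
proof -
  have "monom 1 m * P = (\<Sum>j\<le>degree P. monom (coeff P j) (j + m))"
    by (subst (1) poly_as_sum_of_monoms[symmetric]) (simp add: sum_distrib_left mult_monom add.commute)
  then show ?thesis
    by (simp add: laguerre_moment_sum laguerre_moment_monom)
qed

lemma sum_alternating_binomial_Suc:
  fixes f :: "nat \<Rightarrow> real"
  shows "(\<Sum>j\<le>Suc k. (-1)^j * real (Suc k choose j) * f j) =
         (\<Sum>j\<le>k. (-1)^j * real (k choose j) * (f j - f (Suc j)))"
proof -
  have shift: "(\<Sum>j\<le>Suc k. (-1)^j * real (Suc k choose j) * f j) =
     f 0 + (\<Sum>j\<le>k. (-1)^(Suc j) * real (k choose j) * f (Suc j)) +
        (\<Sum>j\<le>k. (-1)^(Suc j) * real (k choose Suc j) * f (Suc j))"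
    by (subst sum.atMost_Suc_shift) (simp add: algebra_simps flip: sum.distrib)
  have unshift: "(\<Sum>j\<le>k. (-1)^(Suc j) * real (k choose Suc j) * f (Suc j)) =
      (\<Sum>j\<le>Suc k. (-1)^j * real (k choose j) * f j) - f 0"
    by (subst sum.atMost_Suc_shift) simp
  have "(\<Sum>j\<le>Suc k. (-1)^j * real (k choose j) * f j) = (\<Sum>j\<le>k. (-1)^j * real (k choose j) * f j)"
    by simp
  then show ?thesis
    unfolding shift unshift by (simp add: sum_subtractf algebra_simps sum.distrib sum_negf)
qed

text \<open>The \<open>k\<close>-th finite difference annihilates polynomials of degree \<open>< k\<close>.\<close>
lemma sum_alternating_binomial_pochhammer:
  assumes "m \<le> k"
  shows "(\<Sum>j\<le>k. (-1)^j * real (k choose j) * pochhammer (real j + c) m) =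
     (if m = k then (-1)^k * fact k else 0)"
  using assms
proof (induction k arbitrary: m c)
  case 0
  then show ?case by simp
next
  case (Suc k)
  show ?case
  proof (cases m)
    case 0
    then show ?thesis
      using sum_alternating_binomial_Suc[of k "\<lambda>j. pochhammer (real j + c) m"] by simp
  next
    case (Suc m')
    have diff: "pochhammer (real j + c) m - pochhammer (real (Suc j) + c) m =
        - real m * pochhammer (real j + (c + 1)) m'" for j
    proof -
      have "pochhammer (real j + c) m = (real j + c) * pochhammer (real j + (c + 1)) m'"
        by (simp add: Suc pochhammer_rec algebra_simps)
      moreover have "pochhammer (real (Suc j) + c) m =
          (real j + (c + 1) + real m') * pochhammer (real j + (c + 1)) m'"
        by (simp add: Suc pochhammer_rec' algebra_simps)
      ultimately show ?thesis by (simp add: Suc algebra_simps)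
    qed
    have "(\<Sum>j\<le>Suc k. (-1)^j * real (Suc k choose j) * pochhammer (real j + c) m) =
        (\<Sum>j\<le>k. (-1)^j * real (k choose j) *
          (pochhammer (real j + c) m - pochhammer (real (Suc j) + c) m))"
      by (rule sum_alternating_binomial_Suc)
    also have "\<dots> = - real m * (\<Sum>j\<le>k. (-1)^j * real (k choose j) * pochhammer (real j + (c + 1)) m')"
      unfolding diff by (simp add: sum_distrib_left algebra_simps)
    also have "\<dots> = - real m * (if m' = k then (-1)^k * fact k else 0)"
      using Suc.IH[of m' "c + 1"] Suc.prems Suc by simp
    also have "\<dots> = (if m = Suc k then (-1)^Suc k * fact (Suc k) else 0)"
      using Suc by (simp add: algebra_simps)
    finally show ?thesis .
  qed
qed

lemma laguerre_moment_monom_mult_monic_laguerre: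
  assumes "m \<le> k"
  shows "laguerre_moment \<rho> (monom 1 m * monic_laguerre \<rho> k) = (if m = k then laguerre_norm \<rho> k else 0)"
proof -
  have "laguerre_moment \<rho> (monom 1 m * monic_laguerre \<rho> k) =
      (\<Sum>j\<le>k. coeff (monic_laguerre \<rho> k) j * fact (j + m + \<rho>))"
    by (simp add: laguerre_moment_monom_mult degree_monic_laguerre)
  also have "\<dots> = (\<Sum>j\<le>k. (-1)^k * fact (k + \<rho>) *
      ((-1)^j * real (k choose j) * pochhammer (real j + (real \<rho> + 1)) m))"
  proof (rule sum.cong)
    fix j assume "j \<in> {..k}"
    then have j: "j \<le> k" by simp
    have "pochhammer (real j + (real \<rho> + 1)) m = fact (j + m + \<rho>) / fact (j + \<rho>)"
      using pochhammer_of_nat_plus_one[of "j + \<rho>" m] by (simp add: add_ac)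
    moreover have "real (k choose j) = fact k / (fact j * fact (k - j))"
      using j by (simp add: binomial_fact)
    ultimately show "coeff (monic_laguerre \<rho> k) j * fact (j + m + \<rho>) = (-1)^k * fact (k + \<rho>) *
        ((-1)^j * real (k choose j) * pochhammer (real j + (real \<rho> + 1)) m)"
      using j by (simp add: coeff_monic_laguerre field_simps add.commute)
  qed simp
  also have "\<dots> = (if m = k then laguerre_norm \<rho> k else 0)"
    using sum_alternating_binomial_pochhammer[OF assms, of "real \<rho> + 1"]
    by (simp add: laguerre_norm_def flip: sum_distrib_left power_add)
  finally show ?thesis .
qed

lemma laguerre_moment_mult_monic_laguerre:
  assumes "degree P \<le> k"
  shows "laguerre_moment \<rho> (P * monic_laguerre \<rho> k) = coeff P k * laguerre_norm \<rho> k"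
proof -
  have "P * monic_laguerre \<rho> k = (\<Sum>i\<le>k. smult (coeff P i) (monom 1 i * monic_laguerre \<rho> k))"
    by (subst poly_as_sum_of_monoms'[OF assms, symmetric])
      (simp add: sum_distrib_right smult_monom flip: mult_smult_left)
  then have "laguerre_moment \<rho> (P * monic_laguerre \<rho> k) =
      (\<Sum>i\<le>k. coeff P i * laguerre_moment \<rho> (monom 1 i * monic_laguerre \<rho> k))"
    by (simp add: laguerre_moment_sum laguerre_moment_smult)
  also have "\<dots> = (\<Sum>i\<le>k. if i = k then coeff P k * laguerre_norm \<rho> k else 0)"
    by (rule sum.cong) (auto simp: laguerre_moment_monom_mult_monic_laguerre)
  finally show ?thesis by simp
qed

lemma laguerre_moment_monic_laguerre_mult:
  "laguerre_moment \<rho> (monic_laguerre \<rho> i * monic_laguerre \<rho> j) =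
     (if i = j then laguerre_norm \<rho> j else 0)"
proof (cases "i \<le> j")
  case True
  then show ?thesis
    using laguerre_moment_mult_monic_laguerre[of "monic_laguerre \<rho> i" j \<rho>]
    by (auto simp: lead_coeff_monic_laguerre coeff_eq_0 degree_monic_laguerre)
next
  case False
  then show ?thesis
    using laguerre_moment_mult_monic_laguerre[of "monic_laguerre \<rho> j" i \<rho>]
    by (auto simp: coeff_eq_0 degree_monic_laguerre mult.commute)
qed

lemma monic_family_expansion:
  fixes B :: "nat \<Rightarrow> 'a::comm_ring_1 poly"
  assumes "\<And>i. degree (B i) = i" and "\<And>i. coeff (B i) i = 1" and "degree P \<le> d"
  shows "\<exists>e. P = (\<Sum>i\<le>d. smult (e i) (B i))"
  using assms(3)
proof (induction d arbitrary: P)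
  case 0
  have "B 0 = 1"
    using assms(1,2)[of 0] degree_0_id[of "B 0"] by (simp add: one_pCons)
  moreover have "P = [:coeff P 0:]"
    using 0 degree_0_id[of P] by simp
  ultimately show ?case by (intro exI[of _ "\<lambda>_. coeff P 0"]) simp
next
  case (Suc d)
  define P' where "P' = P - smult (coeff P (Suc d)) (B (Suc d))"
  have "degree P' \<le> d"
  proof (rule degree_le, intro allI impI)
    fix i assume "d < i"
    then show "coeff P' i = 0"
      using Suc.prems assms(1,2)[of "Suc d"]
      by (cases "i = Suc d") (auto simp: P'_def coeff_eq_0)
  qed
  then obtain e where e: "P' = (\<Sum>i\<le>d. smult (e i) (B i))"
    using Suc.IH by blast
  have "P = (\<Sum>i\<le>d. smult (e i) (B i)) + smult (coeff P (Suc d)) (B (Suc d))"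
    by (simp add: P'_def flip: e)
  then have "P = (\<Sum>i\<le>Suc d. smult ((e(Suc d := coeff P (Suc d))) i) (B i))"
    by (simp add: sum.atMost_Suc)
  then show ?case by blast
qed

lemma monic_laguerre_expansion:
  assumes "degree P \<le> d"
  shows "P = (\<Sum>k\<le>d. smult (laguerre_moment \<rho> (P * monic_laguerre \<rho> k) / laguerre_norm \<rho> k)
                             (monic_laguerre \<rho> k))"
proof -
  obtain e where e: "P = (\<Sum>i\<le>d. smult (e i) (monic_laguerre \<rho> i))"
    using monic_family_expansion[of "monic_laguerre \<rho>" P d] assms
      degree_monic_laguerre lead_coeff_monic_laguerre by blast
  have "laguerre_moment \<rho> (P * monic_laguerre \<rho> m) = e m * laguerre_norm \<rho> m" if "m \<le> d" for m
  proof -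
    have "laguerre_moment \<rho> (P * monic_laguerre \<rho> m) =
        (\<Sum>i\<le>d. e i * laguerre_moment \<rho> (monic_laguerre \<rho> i * monic_laguerre \<rho> m))"
      by (subst e) (simp add: sum_distrib_right laguerre_moment_sum laguerre_moment_smult)
    also have "\<dots> = (\<Sum>i\<le>d. if i = m then e m * laguerre_norm \<rho> m else 0)"
      by (rule sum.cong) (auto simp: laguerre_moment_monic_laguerre_mult)
    finally show ?thesis using that by simp
  qed
  then have "e m = laguerre_moment \<rho> (P * monic_laguerre \<rho> m) / laguerre_norm \<rho> m" if "m \<le> d" for m
    using laguerre_norm_pos[of \<rho> m] that by (simp add: field_simps)
  then show ?thesis by (subst e) (auto intro!: sum.cong)
qed

section \<open>Determinants of linear functionals on monic polynomials\<close>

lemma det_fun_eq_det: "det_fun m A = det (mat m m (\<lambda>(i, j). A i j))"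
  unfolding det_fun_def det_def by (simp add: lessThan_atLeast0)

lemma det_fun_transpose: "det_fun m (\<lambda>i j. A j i) = det_fun m A"
proof -
  have "mat m m (\<lambda>(i, j). A j i) = transpose_mat (mat m m (\<lambda>(i, j). A i j))"
    by (rule eq_matI) auto
  then show ?thesis
    using det_transpose[of "mat m m (\<lambda>(i, j). A i j)" m] by (simp add: det_fun_eq_det)
qed

lemma det_fun_scale:
  "det_fun m (\<lambda>i j. r i * s j * A i j) = (\<Prod>i<m. r i) * (\<Prod>j<m. s j) * det_fun m A"
proof -
  have "(\<Prod>i<m. r i * s (p i) * A i (p i)) = (\<Prod>i<m. r i) * (\<Prod>j<m. s j) * (\<Prod>i<m. A i (p i))"
    if "p permutes {..<m}" for p
    using prod.permute[OF that, of s] by (simp add: comp_def prod.distrib)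
  then show ?thesis
    unfolding det_fun_def sum_distrib_left by (intro sum.cong) (auto simp: algebra_simps)
qed

lemma index_mult_mat_lessThan:
  assumes "A \<in> carrier_mat nr N" "B \<in> carrier_mat N nc" "i < nr" "j < nc"
  shows "(A * B) $$ (i, j) = (\<Sum>k<N. A $$ (i, k) * B $$ (k, j))"
  using assms by (simp add: scalar_prod_def lessThan_atLeast0)

lemma prod_list_diag_mat: "prod_list (diag_mat A) = (\<Prod>i<dim_row A. A $$ (i, i))"
  by (simp add: diag_mat_def prod.distinct_set_conv_list[symmetric] atLeast0LessThan)

lemma linear_functional_sum:
  assumes "\<And>P Q. \<phi> (P + Q) = \<phi> P + \<phi> Q" and "\<And>c P. \<phi> (smult c P) = c * \<phi> P"
  shows "\<phi> (\<Sum>k\<in>A. smult (c k) (P k)) = (\<Sum>k\<in>A. c k * (\<phi> (P k) :: real))"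
proof -
  have "\<phi> 0 = 0"
    using assms(2)[of 0 0] by simp
  then show ?thesis
    by (induction A rule: infinite_finite_induct) (simp_all add: assms)
qed

text \<open>\<open>[\<phi>\<^sub>i(p\<^sub>k)] = [\<phi>\<^sub>i(x\<^sup>j)] \<cdot> [coeff (p\<^sub>k) j]\<close>, and the second factor is unitriangular.\<close>
lemma det_fun_linear_functionals_monic:
  fixes \<phi> :: "nat \<Rightarrow> real poly \<Rightarrow> real" and p :: "nat \<Rightarrow> real poly"
  assumes add: "\<And>i P Q. \<phi> i (P + Q) = \<phi> i P + \<phi> i Q"
    and hom: "\<And>i c P. \<phi> i (smult c P) = c * \<phi> i P"
    and deg: "\<And>k. degree (p k) \<le> k" and lead: "\<And>k. coeff (p k) k = 1"
  shows "det_fun m (\<lambda>i k. \<phi> i (p k)) = det_fun m (\<lambda>i k. \<phi> i (monom 1 k))"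
proof -
  define A where "A = mat m m (\<lambda>(i, j). \<phi> i (monom 1 j))"
  define U where "U = mat m m (\<lambda>(j, k). coeff (p k) j)"
  have "mat m m (\<lambda>(i, k). \<phi> i (p k)) = A * U"
  proof (rule eq_matI)
    fix i k assume "i < dim_row (A * U)" "k < dim_col (A * U)"
    then have i: "i < m" and k: "k < m" by (simp_all add: A_def U_def)
    have "p k = (\<Sum>j<m. smult (coeff (p k) j) (monom 1 j))"
      using poly_as_sum_of_monoms'[of "p k" "m - 1"] deg[of k] k
      by (simp add: smult_monom lessThan_Suc_atMost[symmetric])
    then have "\<phi> i (p k) = \<phi> i (\<Sum>j<m. smult (coeff (p k) j) (monom 1 j))"
      by (rule arg_cong)
    also have "\<dots> = (\<Sum>j<m. coeff (p k) j * \<phi> i (monom 1 j))"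
      by (rule linear_functional_sum[OF add hom])
    also have "\<dots> = (A * U) $$ (i, k)"
      using i k by (subst index_mult_mat_lessThan[OF _ _ i k]) (auto simp: A_def U_def intro!: sum.cong)
    finally show "mat m m (\<lambda>(i, k). \<phi> i (p k)) $$ (i, k) = (A * U) $$ (i, k)"
      using i k by simp
  qed (auto simp: A_def U_def)
  moreover have "coeff (p k) j = 0" if "k < j" for j k
    using deg[of k] that by (simp add: coeff_eq_0)
  then have "det U = 1"
    by (subst det_upper_triangular[of _ m]) (auto simp: upper_triangular_def U_def lead prod_list_diag_mat)
  ultimately show ?thesis
    using det_mult[of A m U] by (simp add: det_fun_eq_det A_def U_def)
qed

lemma vandermonde_Suc: "vandermonde (Suc n) y = vandermonde n y * (\<Prod>i<n. y n - y i)"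
proof -
  have "{i<..<Suc n} = insert n {i<..<n}" if "i < n" for i
    using that by auto
  then have "(\<Prod>i<n. \<Prod>k\<in>{i<..<Suc n}. y k - y i) = (\<Prod>i<n. (\<Prod>k\<in>{i<..<n}. y k - y i) * (y n - y i))"
    by (intro prod.cong) (auto simp: mult.commute)
  moreover have "{n<..<Suc n} = {}" by auto
  ultimately show ?thesis
    by (simp add: vandermonde_def prod.distrib)
qed

lemma det_fun_powers_eq_vandermonde: "det_fun n (\<lambda>i j. y i ^ j) = vandermonde n y"
proof (induction n)
  case 0
  then show ?case by (simp add: det_fun_def vandermonde_def)
next
  case (Suc n)
  \<comment> \<open>Replacing \<open>x\<^sup>k\<close> by \<open>x\<^sup>k\<^sup>-\<^sup>1(x - y\<^sub>n)\<close> for \<open>k \<ge> 1\<close> clears the last row but one entry.\<close>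
  define p where "p k = (if k = 0 then 1 else monom 1 (k - 1) * [:- y n, 1:])" for k
  define A where "A = mat (Suc n) (Suc n) (\<lambda>(i, k). poly (p k) (y i))"
  have "degree (p k) \<le> k" for k
    using degree_mult_le[of "monom 1 (k - 1)" "[:- y n, 1:]"] degree_monom_le[of "1::real" "k - 1"]
    by (auto simp: p_def simp del: mult_pCons_right)
  moreover have "coeff (p k) k = 1" for k
    by (auto simp: p_def coeff_monom_mult simp del: mult_pCons_right)
  ultimately have "det_fun (Suc n) (\<lambda>i k. y i ^ k) = det_fun (Suc n) (\<lambda>i k. poly (p k) (y i))"
    by (subst det_fun_linear_functionals_monic[where p = p]) (auto simp: poly_monom)
  also have "\<dots> = det A"
    by (simp add: det_fun_eq_det A_def)
  also have "A \<in> carrier_mat (1 + n) (1 + n)"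
    by (simp add: A_def)
  then have "det A = (-1) ^ (1 * n) *
      det (mat (1 + n) (1 + n) (\<lambda>(i, j). A $$ (if i < 1 then i + n else i - 1, j)))"
    by (rule det_swap_rows)
  also have "mat (1 + n) (1 + n) (\<lambda>(i, j). A $$ (if i < 1 then i + n else i - 1, j)) =
      four_block_mat (1\<^sub>m 1) (0\<^sub>m 1 n) (mat n 1 (\<lambda>_. 1)) (mat n n (\<lambda>(i, j). (y i - y n) * y i ^ j))"
    by (rule eq_matI) (auto simp: A_def p_def poly_monom algebra_simps)
  also have "det \<dots> = det (mat n n (\<lambda>(i, j). (y i - y n) * y i ^ j))"
    by (subst det_four_block_mat_upper_right_zero) auto
  also have "\<dots> = (\<Prod>i<n. y i - y n) * vandermonde n y"
    using det_fun_scale[of n "\<lambda>i. y i - y n" "\<lambda>_. 1" "\<lambda>i j. y i ^ j"]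
    by (simp add: Suc.IH flip: det_fun_eq_det)
  finally show ?case
    using prod_uminus[of "\<lambda>i. y i - y n" "{..<n}"] by (simp add: vandermonde_Suc)
qed

lemma det_fun_monic_eq_vandermonde:
  assumes "\<And>k. degree (p k) \<le> k" and "\<And>k. coeff (p k) k = 1"
  shows "det_fun n (\<lambda>i j. poly (p j) (y i)) = vandermonde n y"
  using det_fun_linear_functionals_monic[of "\<lambda>i P. poly P (y i)" p n] assms
  by (simp add: poly_monom det_fun_powers_eq_vandermonde)

section \<open>Heine's identity\<close>

lemma sum_permutations_sign_sign_prod:
  "(\<Sum>\<sigma> | \<sigma> permutes {..<n}. \<Sum>\<tau> | \<tau> permutes {..<n}.
      of_int (sign \<sigma>) * of_int (sign \<tau>) * (\<Prod>k<n. F (\<sigma> k) (\<tau> k) :: real)) = fact n * det_fun n F"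
proof -
  have "(\<Sum>\<tau> | \<tau> permutes {..<n}. of_int (sign \<sigma>) * of_int (sign \<tau>) * (\<Prod>k<n. F (\<sigma> k) (\<tau> k)))
      = det_fun n F" if \<sigma>: "\<sigma> permutes {..<n}" for \<sigma>
  proof -
    have "(\<Sum>\<tau> | \<tau> permutes {..<n}. of_int (sign \<sigma>) * of_int (sign \<tau>) * (\<Prod>k<n. F (\<sigma> k) (\<tau> k))) =
        (\<Sum>\<rho> | \<rho> permutes {..<n}. of_int (sign \<sigma>) * of_int (sign (\<rho> \<circ> \<sigma>)) *
          (\<Prod>k<n. F (\<sigma> k) ((\<rho> \<circ> \<sigma>) k)))"
      by (rule sum_permutations_compose_right[OF \<sigma>])
    also have "\<dots> = (\<Sum>\<rho> | \<rho> permutes {..<n}. of_int (sign \<rho>) * (\<Prod>i<n. F i (\<rho> i)))"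
    proof (rule sum.cong)
      fix \<rho> assume "\<rho> \<in> {\<rho>. \<rho> permutes {..<n}}"
      then have "sign (\<rho> \<circ> \<sigma>) = sign \<rho> * sign \<sigma>"
        using \<sigma> by (intro sign_compose) (auto intro: permutes_imp_permutation)
      moreover have "(\<Prod>k<n. F (\<sigma> k) ((\<rho> \<circ> \<sigma>) k)) = (\<Prod>i<n. F i (\<rho> i))"
        using prod.permute[OF \<sigma>, of "\<lambda>i. F i (\<rho> i)"] by (simp add: comp_def)
      moreover have "sign \<sigma> * sign \<sigma> = 1"
        by (simp add: sign_def)
      ultimately show "of_int (sign \<sigma>) * of_int (sign (\<rho> \<circ> \<sigma>)) * (\<Prod>k<n. F (\<sigma> k) ((\<rho> \<circ> \<sigma>) k)) =
          of_int (sign \<rho>) * (\<Prod>i<n. F i (\<rho> i))"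
        by (simp add: algebra_simps flip: of_int_mult)
    qed simp
    finally show ?thesis by (simp add: det_fun_def)
  qed
  then show ?thesis
    using card_permutations[of "{..<n}" n] by simp
qed

lemma prod_mult_vandermonde_square:
  assumes "\<And>k. degree (p k) \<le> k" and "\<And>k. coeff (p k) k = 1"
  shows "(\<Prod>k<n. g (y k)) * (vandermonde n y)\<^sup>2 =
    (\<Sum>\<sigma> | \<sigma> permutes {..<n}. \<Sum>\<tau> | \<tau> permutes {..<n}. of_int (sign \<sigma>) * of_int (sign \<tau>) *
       (\<Prod>k<n. g (y k) * poly (p (\<sigma> k)) (y k) * poly (p (\<tau> k)) (y k)))"
proof -
  define V where "V \<sigma> = of_int (sign \<sigma>) * (\<Prod>k<n. poly (p (\<sigma> k)) (y k))" for \<sigma>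
  have "vandermonde n y = (\<Sum>\<sigma> | \<sigma> permutes {..<n}. V \<sigma>)"
    unfolding det_fun_monic_eq_vandermonde[OF assms, symmetric] det_fun_def V_def ..
  then have "(\<Prod>k<n. g (y k)) * (vandermonde n y)\<^sup>2 =
      (\<Prod>k<n. g (y k)) * ((\<Sum>\<sigma> | \<sigma> permutes {..<n}. V \<sigma>) * (\<Sum>\<tau> | \<tau> permutes {..<n}. V \<tau>))"
    by (simp add: power2_eq_square)
  also have "\<dots> = (\<Sum>\<sigma> | \<sigma> permutes {..<n}. \<Sum>\<tau> | \<tau> permutes {..<n}. (\<Prod>k<n. g (y k)) * V \<sigma> * V \<tau>)"
    by (subst sum_product) (simp add: sum_distrib_left mult.assoc)
  finally have "(\<Prod>k<n. g (y k)) * (vandermonde n y)\<^sup>2 =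
      (\<Sum>\<sigma> | \<sigma> permutes {..<n}. \<Sum>\<tau> | \<tau> permutes {..<n}. (\<Prod>k<n. g (y k)) * V \<sigma> * V \<tau>)" .
  then show ?thesis
    by (simp add: V_def prod.distrib algebra_simps)
qed

lemma heine_identity:
  fixes g :: "real \<Rightarrow> real" and p :: "nat \<Rightarrow> real poly"
  assumes deg: "\<And>k. degree (p k) \<le> k" and lead: "\<And>k. coeff (p k) k = 1"
    and integrable: "\<And>i j. integrable lborel (\<lambda>t. g t * poly (p i) t * poly (p j) t)"
  shows "(\<integral>y. (\<Prod>k<n. g (y k)) * (vandermonde n y)\<^sup>2 \<partial>Pi\<^sub>M {..<n} (\<lambda>_. lborel)) =
    fact n * det_fun n (\<lambda>i j. \<integral>t. g t * poly (p i) t * poly (p j) t \<partial>lborel)"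
proof -
  interpret product_sigma_finite "\<lambda>_::nat. lborel"
    unfolding product_sigma_finite_def by (simp add: sigma_finite_lborel)
  define G where "G i j t = g t * poly (p i) t * poly (p j) t" for i j t
  have "integrable (Pi\<^sub>M {..<n} (\<lambda>_. lborel)) (\<lambda>y. \<Prod>k<n. G (\<sigma> k) (\<tau> k) (y k))"
    "(\<integral>y. (\<Prod>k<n. G (\<sigma> k) (\<tau> k) (y k)) \<partial>Pi\<^sub>M {..<n} (\<lambda>_. lborel)) =
       (\<Prod>k<n. \<integral>t. G (\<sigma> k) (\<tau> k) t \<partial>lborel)" for \<sigma> \<tau>
    using integrable by (auto simp: G_def intro!: product_integrable_prod product_integral_prod)
  then have "(\<integral>y. (\<Prod>k<n. g (y k)) * (vandermonde n y)\<^sup>2 \<partial>Pi\<^sub>M {..<n} (\<lambda>_. lborel)) =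
      (\<Sum>\<sigma> | \<sigma> permutes {..<n}. \<Sum>\<tau> | \<tau> permutes {..<n}. of_int (sign \<sigma>) * of_int (sign \<tau>) *
        (\<Prod>k<n. \<integral>t. G (\<sigma> k) (\<tau> k) t \<partial>lborel))"
    by (simp add: prod_mult_vandermonde_square[OF deg lead] integral_sum integrable_sum flip: G_def)
  also have "\<dots> = fact n * det_fun n (\<lambda>i j. \<integral>t. G i j t \<partial>lborel)"
    by (rule sum_permutations_sign_sign_prod)
  finally show ?thesis
    by (simp add: G_def)
qed

lemma indicator_PiE_eq_prod:
  assumes "y \<in> extensional I" "finite I"
  shows "indicator (Pi\<^sub>E I S) y = (\<Prod>i\<in>I. indicator (S i) (y i) :: real)"
proof (cases "y \<in> Pi\<^sub>E I S")
  case False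
  then obtain i where "i \<in> I" "y i \<notin> S i"
    using assms(1) by (auto simp: PiE_def Pi_def)
  then show ?thesis
    using False assms(2) by (auto intro!: prod_zero[symmetric] bexI[of _ i])
qed (auto intro!: prod.neutral simp: PiE_iff)

lemma set_integral_laguerre_ensemble:
  "set_lebesgue_integral (Pi\<^sub>M {..<n} (\<lambda>_. lborel)) (Pi\<^sub>E {..<n} (\<lambda>_. {0..}))
     (\<lambda>y. (\<Prod>k<n. poly q (y k) * y k ^ \<rho> * exp (- y k)) * (vandermonde n y)\<^sup>2) =
   fact n * det_fun n (\<lambda>i j. laguerre_moment \<rho> (q * monic_laguerre \<rho> i * monic_laguerre \<rho> j))"
proof -
  define g where "g t = indicator {0..} t * (poly q t * t ^ \<rho> * exp (- t))" for t :: real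
  have moment: "has_bochner_integral lborel (\<lambda>t. g t * poly (monic_laguerre \<rho> i) t * poly (monic_laguerre \<rho> j) t)
      (laguerre_moment \<rho> (q * monic_laguerre \<rho> i * monic_laguerre \<rho> j))" for i j
    using has_bochner_integral_laguerre_moment[of "q * monic_laguerre \<rho> i * monic_laguerre \<rho> j" \<rho>]
    by (simp add: g_def algebra_simps)
  have "set_lebesgue_integral (Pi\<^sub>M {..<n} (\<lambda>_. lborel)) (Pi\<^sub>E {..<n} (\<lambda>_. {0..}))
      (\<lambda>y. (\<Prod>k<n. poly q (y k) * y k ^ \<rho> * exp (- y k)) * (vandermonde n y)\<^sup>2) =
      (\<integral>y. (\<Prod>k<n. g (y k)) * (vandermonde n y)\<^sup>2 \<partial>Pi\<^sub>M {..<n} (\<lambda>_. lborel))"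
    unfolding set_lebesgue_integral_def
    by (intro Bochner_Integration.integral_cong)
      (auto simp: indicator_PiE_eq_prod space_PiM PiE_iff g_def prod.distrib)
  also have "\<dots> = fact n * det_fun n (\<lambda>i j. laguerre_moment \<rho> (q * monic_laguerre \<rho> i * monic_laguerre \<rho> j))"
    using moment
    by (subst heine_identity[where p = "monic_laguerre \<rho>"]) (auto simp: degree_monic_laguerre lead_coeff_monic_laguerre
        has_bochner_integral_iff)
  finally show ?thesis .
qed

section \<open>Christoffel's determinant identity\<close>

definition christoffel_factor :: "real \<Rightarrow> real \<Rightarrow> nat \<Rightarrow> real poly" where
  "christoffel_factor a b \<alpha> = [:a, -1:] * [:b, -1:] ^ \<alpha>"

definition hermite_data :: "real \<Rightarrow> real \<Rightarrow> real poly \<Rightarrow> nat \<Rightarrow> real" where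
  "hermite_data a b P m = (if m = 0 then poly P a else poly ((pderiv ^^ (m - 1)) P) b)"

definition christoffel_coeff :: "nat \<Rightarrow> real \<Rightarrow> real \<Rightarrow> nat \<Rightarrow> nat \<Rightarrow> nat \<Rightarrow> real" where
  "christoffel_coeff \<rho> a b \<alpha> j k =
     laguerre_moment \<rho> (christoffel_factor a b \<alpha> * monic_laguerre \<rho> j * monic_laguerre \<rho> k) /
     laguerre_norm \<rho> k"

lemma poly_christoffel_factor: "poly (christoffel_factor a b \<alpha>) y = (a - y) * (b - y) ^ \<alpha>"
  by (simp add: christoffel_factor_def poly_power algebra_simps)

lemma degree_christoffel_factor: "degree (christoffel_factor a b \<alpha>) = Suc \<alpha>"
  unfolding christoffel_factor_def by (subst degree_mult_eq) (auto simp del: mult_pCons_left)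

lemma lead_coeff_christoffel_factor: "lead_coeff (christoffel_factor a b \<alpha>) = (-1) ^ Suc \<alpha>"
  unfolding christoffel_factor_def lead_coeff_mult lead_coeff_power by simp

lemma degree_christoffel_factor_mult_monic_laguerre:
  "degree (christoffel_factor a b \<alpha> * monic_laguerre \<rho> j) = j + Suc \<alpha>"
  by (subst degree_mult_eq) (auto simp: degree_christoffel_factor monic_laguerre_nonzero
      degree_monic_laguerre dest: arg_cong[of _ _ degree])

lemma lead_coeff_christoffel_factor_mult_monic_laguerre:
  "coeff (christoffel_factor a b \<alpha> * monic_laguerre \<rho> j) (j + Suc \<alpha>) = (-1) ^ Suc \<alpha>"
  using lead_coeff_mult[of "christoffel_factor a b \<alpha>" "monic_laguerre \<rho> j"]
  by (simp add: degree_christoffel_factor_mult_monic_laguerre lead_coeff_christoffel_factor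
      degree_monic_laguerre lead_coeff_monic_laguerre)

lemma christoffel_coeff_eq_0:
  assumes "j + Suc \<alpha> < k"
  shows "christoffel_coeff \<rho> a b \<alpha> j k = 0"
  using laguerre_moment_mult_monic_laguerre[of "christoffel_factor a b \<alpha> * monic_laguerre \<rho> j" k \<rho>] assms
  by (simp add: christoffel_coeff_def degree_christoffel_factor_mult_monic_laguerre coeff_eq_0)

lemma christoffel_coeff_top: "christoffel_coeff \<rho> a b \<alpha> j (j + Suc \<alpha>) = (-1) ^ Suc \<alpha>"
  using laguerre_moment_mult_monic_laguerre[of "christoffel_factor a b \<alpha> * monic_laguerre \<rho> j"
      "j + Suc \<alpha>" \<rho>] laguerre_norm_pos[of \<rho> "j + Suc \<alpha>"]
  by (simp add: christoffel_coeff_def degree_christoffel_factor_mult_monic_laguerre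
      lead_coeff_christoffel_factor_mult_monic_laguerre[simplified])

lemma christoffel_factor_mult_expansion:
  assumes "j + Suc \<alpha> < N"
  shows "christoffel_factor a b \<alpha> * monic_laguerre \<rho> j =
    (\<Sum>k<N. smult (christoffel_coeff \<rho> a b \<alpha> j k) (monic_laguerre \<rho> k))"
proof -
  have "christoffel_factor a b \<alpha> * monic_laguerre \<rho> j =
      (\<Sum>k\<le>j + Suc \<alpha>. smult (christoffel_coeff \<rho> a b \<alpha> j k) (monic_laguerre \<rho> k))"
    unfolding christoffel_coeff_def
    by (rule monic_laguerre_expansion) (simp add: degree_christoffel_factor_mult_monic_laguerre)
  also have "\<dots> = (\<Sum>k<N. smult (christoffel_coeff \<rho> a b \<alpha> j k) (monic_laguerre \<rho> k))"
    by (rule sum.mono_neutral_left) (use assms in \<open>auto simp: christoffel_coeff_eq_0\<close>)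
  finally show ?thesis .
qed

lemma poly_higher_pderiv_root_power_mult:
  assumes "r < m"
  shows "poly ((pderiv ^^ r) ([:-b, 1:] ^ m * Q)) (b :: real) = 0"
  using assms
proof (induction r arbitrary: m Q)
  case 0
  then show ?case by (simp add: poly_power)
next
  case (Suc r)
  then obtain m' where m: "m = Suc m'" by (cases m) auto
  have "pderiv ([:-b, 1:] ^ m * Q) = [:-b, 1:] ^ m' * ([:-b, 1:] * pderiv Q + smult (of_nat m) Q)"
    unfolding pderiv_mult m pderiv_power_Suc by (simp add: pderiv_pCons algebra_simps)
  then show ?case
    using Suc.IH[of m'] Suc.prems m by (simp del: funpow.simps add: funpow_Suc_right)
qed

lemma hermite_data_add: "hermite_data a b (P + Q) m = hermite_data a b P m + hermite_data a b Q m"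
  by (simp add: hermite_data_def higher_pderiv_add)

lemma hermite_data_smult: "hermite_data a b (smult c P) m = c * hermite_data a b P m"
  by (simp add: hermite_data_def higher_pderiv_smult)

lemma hermite_data_christoffel_factor_mult:
  assumes "m \<le> \<alpha>"
  shows "hermite_data a b (christoffel_factor a b \<alpha> * P) m = 0"
proof (cases "m = 0")
  case False
  have "[:b, -1:] = smult (-1) [:-b, 1:]"
    by simp
  then have "[:b, -1:] ^ \<alpha> = smult ((-1) ^ \<alpha>) ([:-b, 1:] ^ \<alpha>)"
    by (metis smult_power)
  then have "christoffel_factor a b \<alpha> * P = [:-b, 1:] ^ \<alpha> * smult ((-1) ^ \<alpha>) ([:a, -1:] * P)"
    by (simp add: christoffel_factor_def algebra_simps)
  moreover have "poly ((pderiv ^^ (m - 1)) ([:-b, 1:] ^ \<alpha> * smult ((-1) ^ \<alpha>) ([:a, -1:] * P))) b = 0"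
    by (rule poly_higher_pderiv_root_power_mult) (use False assms in simp)
  ultimately show ?thesis
    using False by (simp only: hermite_data_def if_False)
qed (simp add: hermite_data_def poly_christoffel_factor)

lemma christoffel_coeff_hermite_data_sum:
  assumes "j + Suc \<alpha> < N" "m \<le> \<alpha>"
  shows "(\<Sum>k<N. christoffel_coeff \<rho> a b \<alpha> j k * hermite_data a b (monic_laguerre \<rho> k) m) = 0"
proof -
  have "0 = hermite_data a b (christoffel_factor a b \<alpha> * monic_laguerre \<rho> j) m"
    using hermite_data_christoffel_factor_mult[OF assms(2)] by simp
  also have "\<dots> = hermite_data a b (\<Sum>k<N. smult (christoffel_coeff \<rho> a b \<alpha> j k) (monic_laguerre \<rho> k)) m"
    by (simp only: christoffel_factor_mult_expansion[OF assms(1)])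
  also have "\<dots> = (\<Sum>k<N. christoffel_coeff \<rho> a b \<alpha> j k * hermite_data a b (monic_laguerre \<rho> k) m)"
    by (rule linear_functional_sum) (simp_all add: hermite_data_add hermite_data_smult)
  finally show ?thesis by simp
qed

definition christoffel_mat :: "nat \<Rightarrow> real \<Rightarrow> real \<Rightarrow> nat \<Rightarrow> nat \<Rightarrow> real mat" where
  "christoffel_mat \<rho> a b \<alpha> n = mat n n (\<lambda>(i, j). christoffel_coeff \<rho> a b \<alpha> i j)"

definition hermite_mat :: "nat \<Rightarrow> real \<Rightarrow> real \<Rightarrow> nat \<Rightarrow> nat \<Rightarrow> real mat" where
  "hermite_mat \<rho> a b \<alpha> s = mat (Suc \<alpha>) (Suc \<alpha>) (\<lambda>(i, m). hermite_data a b (monic_laguerre \<rho> (s + i)) m)"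

text \<open>The first \<open>n\<close> rows of the infinite banded matrix \<open>C\<close>, completed by unit rows.\<close>
definition band_completion_mat :: "nat \<Rightarrow> real \<Rightarrow> real \<Rightarrow> nat \<Rightarrow> nat \<Rightarrow> real mat" where
  "band_completion_mat \<rho> a b \<alpha> n = mat (n + Suc \<alpha>) (n + Suc \<alpha>)
     (\<lambda>(i, k). if i < n then christoffel_coeff \<rho> a b \<alpha> i k else if k = i - n then 1 else 0)"

definition hermite_completion_mat :: "nat \<Rightarrow> real \<Rightarrow> real \<Rightarrow> nat \<Rightarrow> nat \<Rightarrow> real mat" where
  "hermite_completion_mat \<rho> a b \<alpha> n = mat (n + Suc \<alpha>) (n + Suc \<alpha>)
     (\<lambda>(k, j). if j < n then (if k = j then 1 else 0) else hermite_data a b (monic_laguerre \<rho> k) (j - n))"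

lemma band_completion_mat_mult_hermite_completion_mat:
  "band_completion_mat \<rho> a b \<alpha> n * hermite_completion_mat \<rho> a b \<alpha> n =
     four_block_mat (christoffel_mat \<rho> a b \<alpha> n) (0\<^sub>m n (Suc \<alpha>))
       (mat (Suc \<alpha>) n (\<lambda>(i, j). if i = j then 1 else 0)) (hermite_mat \<rho> a b \<alpha> 0)"
  (is "?B * ?Q = ?R")
proof (rule eq_matI)
  fix i j assume "i < dim_row ?R" and "j < dim_col ?R"
  then have i: "i < n + Suc \<alpha>" and j: "j < n + Suc \<alpha>"
    by (simp_all add: christoffel_mat_def hermite_mat_def)
  have prod: "(?B * ?Q) $$ (i, j) = (\<Sum>k<n + Suc \<alpha>. ?B $$ (i, k) * ?Q $$ (k, j))"
    by (rule index_mult_mat_lessThan[OF _ _ i j])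
      (auto simp: band_completion_mat_def hermite_completion_mat_def)
  show "(?B * ?Q) $$ (i, j) = ?R $$ (i, j)"
  proof (cases "i < n")
    case True
    show ?thesis
    proof (cases "j < n")
      case True
      then show ?thesis
        using \<open>i < n\<close> j unfolding prod
        by (simp add: band_completion_mat_def hermite_completion_mat_def christoffel_mat_def
            if_distrib[of "\<lambda>x. _ * x"] sum.delta' cong: if_cong)
    next
      case False
      have "(?B * ?Q) $$ (i, j) = (\<Sum>k<n + Suc \<alpha>. christoffel_coeff \<rho> a b \<alpha> i k *
          hermite_data a b (monic_laguerre \<rho> k) (j - n))"
        unfolding prod by (rule sum.cong) (use \<open>i < n\<close> False j in
          \<open>auto simp: band_completion_mat_def hermite_completion_mat_def\<close>)
      also have "\<dots> = 0"
        by (rule christoffel_coeff_hermite_data_sum) (use \<open>i < n\<close> False j in auto)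
      finally show ?thesis
        using \<open>i < n\<close> False j by (simp add: christoffel_mat_def hermite_mat_def)
    qed
  next
    case False
    have "(?B * ?Q) $$ (i, j) = ?Q $$ (i - n, j)"
      unfolding prod using False i j
      by (simp add: band_completion_mat_def hermite_completion_mat_def if_distrib[of "\<lambda>x. x * _"]
          sum.delta cong: if_cong; linarith)
    then show ?thesis
      using False i j
      by (auto simp: hermite_completion_mat_def christoffel_mat_def hermite_mat_def)
  qed
qed (simp_all add: band_completion_mat_def hermite_completion_mat_def christoffel_mat_def
    hermite_mat_def)

lemma det_hermite_completion_mat:
  "det (hermite_completion_mat \<rho> a b \<alpha> n) = det (hermite_mat \<rho> a b \<alpha> n)"
proof -
  have "hermite_completion_mat \<rho> a b \<alpha> n = four_block_mat (1\<^sub>m n)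
      (mat n (Suc \<alpha>) (\<lambda>(k, m). hermite_data a b (monic_laguerre \<rho> k) m))
      (0\<^sub>m (Suc \<alpha>) n) (hermite_mat \<rho> a b \<alpha> n)"
    by (rule eq_matI) (auto simp: hermite_completion_mat_def hermite_mat_def)
  then show ?thesis
    by (simp add: det_four_block_mat_lower_left_zero[of _ n _ "Suc \<alpha>"] hermite_mat_def)
qed

lemma det_band_completion_mat: "det (band_completion_mat \<rho> a b \<alpha> n) = 1"
proof -
  let ?M = "Suc \<alpha>"
  define C where "C = mat n n (\<lambda>(i, j). christoffel_coeff \<rho> a b \<alpha> i (j + ?M))"
  have C: "C \<in> carrier_mat n n"
    by (simp add: C_def)
  have "band_completion_mat \<rho> a b \<alpha> n \<in> carrier_mat (n + ?M) (n + ?M)"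
    by (simp add: band_completion_mat_def)
  note swap = det_swap_cols[OF this]
  have "mat (n + ?M) (n + ?M) (\<lambda>(i, j). band_completion_mat \<rho> a b \<alpha> n $$ (i, if j < n then j + ?M else j - n)) =
      four_block_mat C (mat n ?M (\<lambda>(i, j). christoffel_coeff \<rho> a b \<alpha> i j)) (0\<^sub>m ?M n) (1\<^sub>m ?M)"
    by (rule eq_matI) (auto simp: band_completion_mat_def C_def)
  then have "det (band_completion_mat \<rho> a b \<alpha> n) = (-1) ^ (n * ?M) *
      det (four_block_mat C (mat n ?M (\<lambda>(i, j). christoffel_coeff \<rho> a b \<alpha> i j)) (0\<^sub>m ?M n) (1\<^sub>m ?M))"
    by (simp add: swap)
  also have "det (four_block_mat C (mat n ?M (\<lambda>(i, j). christoffel_coeff \<rho> a b \<alpha> i j)) (0\<^sub>m ?M n) (1\<^sub>m ?M)) =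
      det C * det (1\<^sub>m ?M :: real mat)"
    by (rule det_four_block_mat_lower_left_zero[OF C]) auto
  also have "det C = ((-1) ^ ?M) ^ n"
    by (subst det_lower_triangular[of n])
      (auto simp: C_def christoffel_coeff_eq_0 prod_list_diag_mat christoffel_coeff_top[simplified])
  also have "((-1) ^ ?M) ^ n = ((-1) ^ (n * ?M) :: real)"
    by (metis power_mult mult.commute)
  finally have "det (band_completion_mat \<rho> a b \<alpha> n) =
      (-1) ^ (n * ?M) * ((-1) ^ (n * ?M) * det (1\<^sub>m ?M :: real mat))" .
  then show ?thesis
    by (simp only: det_one mult_1_right flip: power_mult_distrib) simp
qed

lemma det_christoffel_mat_mult_det_hermite_mat:
  "det (christoffel_mat \<rho> a b \<alpha> n) * det (hermite_mat \<rho> a b \<alpha> 0) = det (hermite_mat \<rho> a b \<alpha> n)"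
proof -
  have "band_completion_mat \<rho> a b \<alpha> n \<in> carrier_mat (n + Suc \<alpha>) (n + Suc \<alpha>)"
    "hermite_completion_mat \<rho> a b \<alpha> n \<in> carrier_mat (n + Suc \<alpha>) (n + Suc \<alpha>)"
    by (simp_all add: band_completion_mat_def hermite_completion_mat_def)
  from det_mult[OF this]
  have "det (band_completion_mat \<rho> a b \<alpha> n * hermite_completion_mat \<rho> a b \<alpha> n) =
      det (hermite_mat \<rho> a b \<alpha> n)"
    by (simp add: det_band_completion_mat det_hermite_completion_mat)
  then show ?thesis
    unfolding band_completion_mat_mult_hermite_completion_mat
    by (subst (asm) det_four_block_mat_upper_right_zero) (auto simp: christoffel_mat_def hermite_mat_def)
qed

section \<open>Evaluation of the determinants\<close>

lemma higher_pderiv_degree_le: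
  assumes "degree P \<le> r"
  shows "(pderiv ^^ r) P = [:fact r * coeff P r:]"
proof (rule poly_eqI)
  fix i
  show "coeff ((pderiv ^^ r) P) i = coeff [:fact r * coeff P r:] i"
    using assms by (cases i) (auto simp: coeff_higher_pderiv pochhammer_fact coeff_eq_0)
qed

lemma hermite_data_shifted_power:
  "hermite_data a b ([:-b, 1:] ^ i) m =
     (if m = 0 then (a - b) ^ i else if i = m - 1 then fact (m - 1) else 0)"
proof (cases "m = 0 \<or> m - 1 < i")
  case True
  then show ?thesis
    using poly_higher_pderiv_root_power_mult[of "m - 1" i b 1]
    by (auto simp: hermite_data_def poly_power)
next
  case False
  then have "coeff ([:-b, 1:] ^ i) (m - 1) = (if i = m - 1 then 1 else 0)"
    by (auto simp: coeff_linear_power degree_linear_power intro!: coeff_eq_0)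
  then show ?thesis
    using False higher_pderiv_degree_le[of "[:-b, 1:] ^ i" "m - 1"]
    by (simp add: hermite_data_def degree_linear_power)
qed

lemma det_fun_hermite_data_shifted_powers:
  "det_fun (Suc \<alpha>) (\<lambda>k m. hermite_data a b ([:-b, 1:] ^ k) m) = (\<Prod>r<\<alpha>. fact r) * (b - a) ^ \<alpha>"
proof -
  define W where "W = mat (\<alpha> + 1) (\<alpha> + 1) (\<lambda>(k, m). hermite_data a b ([:-b, 1:] ^ k) m)"
  have "W \<in> carrier_mat (\<alpha> + 1) (\<alpha> + 1)"
    by (simp add: W_def)
  from det_swap_cols[OF this]
  have "det W = (-1) ^ (\<alpha> * 1) *
      det (mat (\<alpha> + 1) (\<alpha> + 1) (\<lambda>(i, j). W $$ (i, if j < \<alpha> then j + 1 else j - \<alpha>)))" .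
  also have "det (mat (\<alpha> + 1) (\<alpha> + 1) (\<lambda>(i, j). W $$ (i, if j < \<alpha> then j + 1 else j - \<alpha>))) =
      (\<Prod>i<\<alpha> + 1. if i < \<alpha> then fact i else (a - b) ^ \<alpha>)"
    by (subst det_upper_triangular[of _ "\<alpha> + 1"])
      (auto simp: upper_triangular_def W_def hermite_data_shifted_power prod_list_diag_mat
        intro!: prod.cong)
  also have "\<dots> = (\<Prod>r<\<alpha>. fact r) * (a - b) ^ \<alpha>"
    by (simp add: lessThan_Suc)
  also have "(-1) ^ (\<alpha> * 1) * ((\<Prod>r<\<alpha>. fact r) * (a - b) ^ \<alpha>) = (\<Prod>r<\<alpha>. fact r) * (b - a) ^ \<alpha>"
    by (simp flip: power_mult_distrib)
  finally show ?thesis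
    by (simp add: det_fun_eq_det W_def)
qed

lemma det_hermite_mat_0: "det (hermite_mat \<rho> a b \<alpha> 0) = (\<Prod>r<\<alpha>. fact r) * (b - a) ^ \<alpha>"
proof -
  have "det (hermite_mat \<rho> a b \<alpha> 0) = det_fun (Suc \<alpha>) (\<lambda>k m. hermite_data a b (monic_laguerre \<rho> k) m)"
    by (simp add: hermite_mat_def det_fun_eq_det)
  also have "\<dots> = det_fun (Suc \<alpha>) (\<lambda>m k. hermite_data a b (monic_laguerre \<rho> k) m)"
    by (rule det_fun_transpose[symmetric])
  also have "\<dots> = det_fun (Suc \<alpha>) (\<lambda>m k. hermite_data a b (monom 1 k) m)"
    by (rule det_fun_linear_functionals_monic) (simp_all add: hermite_data_add hermite_data_smult
        degree_monic_laguerre lead_coeff_monic_laguerre)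
  also have "\<dots> = det_fun (Suc \<alpha>) (\<lambda>m k. hermite_data a b ([:-b, 1:] ^ k) m)"
    by (rule det_fun_linear_functionals_monic[symmetric]) (simp_all add: hermite_data_add
        hermite_data_smult degree_linear_power coeff_linear_power)
  also have "\<dots> = det_fun (Suc \<alpha>) (\<lambda>k m. hermite_data a b ([:-b, 1:] ^ k) m)"
    by (rule det_fun_transpose)
  finally show ?thesis
    by (simp add: det_fun_hermite_data_shifted_powers)
qed

lemma hermite_data_monic_laguerre:
  "hermite_data a b (monic_laguerre \<rho> k) m = (-1)^k * fact k *
     (if m = 0 then laguerre \<rho> (int k) a
      else (-1)^(m - 1) * laguerre (real (\<rho> + m) - 1) (int k + 1 - int m) b)"
proof (cases m)
  case 0
  then show ?thesis
    by (simp add: hermite_data_def monic_laguerre_def poly_laguerre_poly)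
next
  case (Suc r)
  show ?thesis
  proof (cases "r \<le> k")
    case True
    then have "int k + 1 - int m = int (k - r)"
      using Suc by simp
    then show ?thesis
      using True Suc by (simp add: hermite_data_def monic_laguerre_def higher_pderiv_smult
          higher_pderiv_laguerre_poly poly_laguerre_poly add.commute)
  next
    case False
    then show ?thesis
      using Suc by (simp add: hermite_data_def monic_laguerre_def higher_pderiv_smult
          higher_pderiv_laguerre_poly laguerre_def)
  qed
qed

lemma prod_alternating_signs:
  "(\<Prod>i<Suc \<alpha>. (-1::real) ^ (n + i)) * (\<Prod>m<Suc \<alpha>. if m = 0 then 1 else (-1) ^ (m - 1)) =
     (-1) ^ (n + \<alpha> * (n + \<alpha>))"
proof -
  have "(\<Prod>m<Suc \<alpha>. if m = 0 then 1 else (-1::real) ^ (m - 1)) = (\<Prod>m<Suc \<alpha>. (-1) ^ (m - 1))"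
    by (rule prod.cong) auto
  moreover have "(\<Sum>i<Suc \<alpha>. n + i) + (\<Sum>m<Suc \<alpha>. m - 1) = n + \<alpha> * (n + \<alpha>)"
    by (induction \<alpha>) (simp_all add: algebra_simps)
  ultimately show ?thesis
    by (metis power_add power_sum)
qed

lemma det_hermite_mat_eq_laguerre_det:
  "det (hermite_mat \<rho> a b \<alpha> n) = (-1) ^ (n + \<alpha> * (n + \<alpha>)) * (\<Prod>i<Suc \<alpha>. fact (n + i)) *
     det_fun (Suc \<alpha>) (\<lambda>i j. if j = 0 then laguerre \<rho> (int (n + i)) a
                           else laguerre (real (\<rho> + j) - 1) (int (n + i) + 1 - int j) b)"
  (is "_ = _ * _ * det_fun _ ?L")
proof -
  have "det (hermite_mat \<rho> a b \<alpha> n) =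
      det_fun (Suc \<alpha>) (\<lambda>i j. hermite_data a b (monic_laguerre \<rho> (n + i)) j)"
    by (simp add: hermite_mat_def det_fun_eq_det)
  also have "(\<lambda>i j. hermite_data a b (monic_laguerre \<rho> (n + i)) j) = (\<lambda>i j.
      ((-1)^(n + i) * fact (n + i)) * (if j = 0 then 1 else (-1) ^ (j - 1)) * ?L i j)"
    by (simp add: fun_eq_iff hermite_data_monic_laguerre)
  also have "det_fun (Suc \<alpha>) \<dots> = (\<Prod>i<Suc \<alpha>. (-1::real) ^ (n + i)) * (\<Prod>j<Suc \<alpha>. if j = 0 then 1 else (-1) ^ (j - 1)) *
      (\<Prod>i<Suc \<alpha>. fact (n + i)) * det_fun (Suc \<alpha>) ?L"
    by (simp add: det_fun_scale prod.distrib)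
  finally show ?thesis
    by (simp only: prod_alternating_signs)
qed

lemma det_fun_laguerre_gram:
  "det_fun n (\<lambda>i j. laguerre_moment \<rho> (christoffel_factor a b \<alpha> * monic_laguerre \<rho> i * monic_laguerre \<rho> j)) =
     (\<Prod>j<n. laguerre_norm \<rho> j) * det (christoffel_mat \<rho> a b \<alpha> n)"
proof -
  have "laguerre_moment \<rho> (christoffel_factor a b \<alpha> * monic_laguerre \<rho> i * monic_laguerre \<rho> j) =
      1 * laguerre_norm \<rho> j * christoffel_coeff \<rho> a b \<alpha> i j" for i j
    using laguerre_norm_pos[of \<rho> j] by (simp add: christoffel_coeff_def)
  then show ?thesis
    using det_fun_scale[of n "\<lambda>_. 1" "laguerre_norm \<rho>" "christoffel_coeff \<rho> a b \<alpha>"]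
    by (simp add: christoffel_mat_def flip: det_fun_eq_det)
qed

lemma fact_mult_prod_fact: "fact n * (\<Prod>j<n. fact j :: real) = (\<Prod>j<n. fact (j + 1))"
  by (induction n) (auto simp: algebra_simps)

lemma K_tilde_eq:
  "K_tilde n \<alpha> = (\<Prod>i<Suc \<alpha>. fact (n + i)) * (fact n * (\<Prod>j<n. laguerre_norm 2 j)) / (\<Prod>r<\<alpha>. fact r)"
proof -
  have "(\<Prod>j = 1..\<alpha> + 1. fact (n + j - 1) :: real) = (\<Prod>i<Suc \<alpha>. fact (n + i))"
    using prod.shift_bounds_cl_Suc_ivl[of "\<lambda>j. fact (n + j - 1) :: real" 0 \<alpha>]
    by (simp add: atLeast0AtMost lessThan_Suc_atMost)
  moreover have "(\<Prod>j<n. fact (j + 1) * fact (j + 2) :: real) = fact n * (\<Prod>j<n. laguerre_norm 2 j)"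
    by (simp only: laguerre_norm_def prod.distrib fact_mult_prod_fact[symmetric] mult.assoc)
  ultimately show ?thesis
    by (simp add: K_tilde_def)
qed

theorem mainTheorem10:
  fixes n \<alpha> :: nat and a b :: real
  assumes "n \<ge> 1" and "a \<noteq> b"
  shows "T_int n a b \<alpha> =
    (-1) ^ (n + \<alpha> * (n + \<alpha>)) * K_tilde n \<alpha> / (b - a) ^ \<alpha> *
    det_fun (\<alpha> + 1) (\<lambda>i j. if j = 0 then laguerre 2 (int (n + i)) a
                           else laguerre (real (j + 1)) (int (n + i) + 1 - int j) b)"
proof -
  have "T_int n a b \<alpha> = set_lebesgue_integral (Pi\<^sub>M {..<n} (\<lambda>_. lborel)) (Pi\<^sub>E {..<n} (\<lambda>_. {0..}))
      (\<lambda>y. (\<Prod>k<n. poly (christoffel_factor a b \<alpha>) (y k) * y k ^ 2 * exp (- y k)) * (vandermonde n y)\<^sup>2)"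
    by (simp add: T_int_def poly_christoffel_factor mult_ac)
  also have "\<dots> = fact n * (\<Prod>j<n. laguerre_norm 2 j) * det (christoffel_mat 2 a b \<alpha> n)"
    by (simp add: set_integral_laguerre_ensemble det_fun_laguerre_gram)
  also have "det (christoffel_mat 2 a b \<alpha> n) =
      det (hermite_mat 2 a b \<alpha> n) / ((\<Prod>r<\<alpha>. fact r) * (b - a) ^ \<alpha>)"
    using det_christoffel_mat_mult_det_hermite_mat[of 2 a b \<alpha> n] assms(2)
    by (simp add: det_hermite_mat_0 field_simps)
  also have "det (hermite_mat 2 a b \<alpha> n) = (-1) ^ (n + \<alpha> * (n + \<alpha>)) * (\<Prod>i<Suc \<alpha>. fact (n + i)) *
      det_fun (\<alpha> + 1) (\<lambda>i j. if j = 0 then laguerre 2 (int (n + i)) a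
                           else laguerre (real (j + 1)) (int (n + i) + 1 - int j) b)"
    using det_hermite_mat_eq_laguerre_det[of 2 a b \<alpha> n] by (simp add: algebra_simps cong: if_cong)
  finally show ?thesis
    using assms(2) by (simp add: K_tilde_eq field_simps)
qed

end
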